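(* If $r$ is a nonzero integer and $n$ is a positive integer, then \[ 5F_r^2 \;\Big|\; (-1)^{r+1}F_{2r(n+1)}+(-1)^{r(n+1)}F_{2r}+F_{2rn}. \]
   Context: $F_n$ denotes the Fibonacci numbers, defined for all integers $n$ by $F_0=0,F_1=1$, $F_n=F_{n-1}+F_{n-2}$, with $F_{-n}=(-1)^{n-1}F_n$. *)

theory Defs
  imports "HOL-Number_Theory.Fib"
begin

definition fibz :: "int \<Rightarrow> int" where
  "fibz n = (if n \<ge> 0 then int (fib (nat n))
             else (-1) ^ (nat (-n) - 1) * int (fib (nat (-n))))"

end

theory Submission
  imports Defs
begin

text \<open>Write \<open>F k = (\<phi>^k - \<psi>^k) / \<surd>5\<close> with \<open>\<phi>\<psi> = -1\<close>. Then the left-hand side, for \<open>r \<ge> 0\<close>,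
  becomes a polynomial in \<open>\<phi>^r, \<psi>^r, \<phi>^(r n), \<psi>^(r n)\<close> which factors as
  \<open>(-1)^(r+1) * 5 * F r * F (r n) * F (r (n+1))\<close>; since \<open>F r\<close> divides \<open>F (r n)\<close>, the factor
  \<open>5 F r ^ 2\<close> appears. The left-hand side is odd in \<open>r\<close>, so negative \<open>r\<close> reduce to positive ones.\<close>

lemma power_difference_triple_identity:
  fixes a b :: "'a::comm_ring_1"
  assumes ab: "a * b = -1"
  shows "(-1)^(m+1) * (a^(2*m*(n+1)) - b^(2*m*(n+1)))
           + (-1)^(m*(n+1)) * (a^(2*m) - b^(2*m)) + (a^(2*m*n) - b^(2*m*n))
         = (-1)^(m+1) * (a^m - b^m) * (a^(m*n) - b^(m*n)) * (a^(m*(n+1)) - b^(m*(n+1)))"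
proof -
  define u v where "u = a^m" and "v = b^m"
  define p q where "p = u^n" and "q = v^n"
  define s :: 'a where "s = (-1)^m"
  have uv: "u * v = s"
    unfolding u_def v_def s_def by (simp add: ab flip: power_mult_distrib)
  have pq: "p * q = s^n"
    unfolding p_def q_def by (simp add: uv flip: power_mult_distrib)
  have ss: "s * s = 1"
    unfolding s_def by (simp flip: power_add)
  have pows: "a^(2*m*(n+1)) = u*u*p*p" "b^(2*m*(n+1)) = v*v*q*q"
    "a^(2*m) = u*u" "b^(2*m) = v*v" "a^(2*m*n) = p*p" "b^(2*m*n) = q*q"
    "a^(m*n) = p" "b^(m*n) = q" "a^(m*(n+1)) = u*p" "b^(m*(n+1)) = v*q"
    unfolding u_def v_def p_def q_def
    by (simp_all add: power_mult power_add power_mult_distrib power2_eq_square mult_ac)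
  have signs: "(-1::'a)^(m+1) = -s" "(-1::'a)^(m*(n+1)) = s * (p*q)"
    unfolding pq s_def by (simp_all add: power_mult power_add mult.commute)
  have "-s * (u - v) * (p - q) * (u*p - v*q)
        = -s*(u*u*p*p - v*v*q*q) + s*(u*v)*(p*p - q*q) + s*(p*q)*(u*u - v*v)"
    by (simp add: algebra_simps)
  also have "s*(u*v) = 1" using uv ss by simp
  finally have "-s * (u - v) * (p - q) * (u*p - v*q)
        = -s*(u*u*p*p - v*v*q*q) + (p*p - q*q) + s*(p*q)*(u*u - v*v)"
    by simp
  then show ?thesis
    unfolding pows signs u_def[symmetric] v_def[symmetric] by (simp add: algebra_simps)
qed

lemma fib_triple_product_identity:
  "(-1)^(m+1) * int (fib (2*m*(n+1))) + (-1)^(m*(n+1)) * int (fib (2*m)) + int (fib (2*m*n))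
     = (-1)^(m+1) * 5 * int (fib m) * int (fib (m*n)) * int (fib (m*(n+1)))"
proof -
  define \<phi> \<psi> :: real where "\<phi> = (1 + sqrt 5) / 2" and "\<psi> = (1 - sqrt 5) / 2"
  have binet: "\<phi>^k - \<psi>^k = sqrt 5 * real (fib k)" for k
    unfolding \<phi>_def \<psi>_def by (simp add: fib_closed_form)
  have "\<phi> * \<psi> = -1"
    unfolding \<phi>_def \<psi>_def by (simp add: field_simps)
  from power_difference_triple_identity[OF this, of m n]
  have "sqrt 5 * ((-1)^(m+1) * real (fib (2*m*(n+1))) + (-1)^(m*(n+1)) * real (fib (2*m))
          + real (fib (2*m*n)))
        = sqrt 5 * ((-1)^(m+1) * 5 * real (fib m) * real (fib (m*n)) * real (fib (m*(n+1))))"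
    unfolding binet by (simp add: algebra_simps)
  then have "real_of_int ((-1)^(m+1) * int (fib (2*m*(n+1))) + (-1)^(m*(n+1)) * int (fib (2*m))
               + int (fib (2*m*n)))
           = real_of_int ((-1)^(m+1) * 5 * int (fib m) * int (fib (m*n)) * int (fib (m*(n+1))))"
    by (subst (asm) mult_left_cancel) simp_all
  then show ?thesis
    by (simp only: of_int_eq_iff)
qed

lemma fib_dvd_fib_mult: "fib m dvd fib (m * k)"
  by (metis fib_gcd gcd_nat.absorb1 dvd_triv_left gcd_dvd2)

lemma five_fib_squared_dvd:
  "5 * int (fib m)^2 dvd
     (-1)^(m+1) * int (fib (2*m*(n+1))) + (-1)^(m*(n+1)) * int (fib (2*m)) + int (fib (2*m*n))"
proof -
  obtain c where "fib (m*n) = fib m * c"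
    using fib_dvd_fib_mult by blast
  then show ?thesis
    unfolding fib_triple_product_identity
    by (intro dvdI[where k = "(-1)^(m+1) * int c * int (fib (m*(n+1)))"])
      (simp add: power2_eq_square mult_ac)
qed

lemma fibz_nonneg: "0 \<le> k \<Longrightarrow> fibz k = int (fib (nat k))"
  unfolding fibz_def by simp

lemma fibz_of_nat [simp]: "fibz (int k) = int (fib k)"
  unfolding fibz_def by simp

lemma fibz_uminus: "fibz (- int k) = (-1)^(k - 1) * int (fib k)"
  unfolding fibz_def by (cases "k = 0") auto

lemma fibz_uminus_even: "fibz (- (2 * k)) = - fibz (2 * k)"
proof -
  have "fibz (- int (2 * j)) = - fibz (int (2 * j))" for j
    unfolding fibz_uminus fibz_of_nat by (cases j) simp_all
  from this[of "nat k"] this[of "nat (- k)"] show ?thesis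
    by (cases "k \<ge> 0") simp_all
qed

lemma fibz_uminus_squared: "fibz (- k)^2 = fibz k^2"
  unfolding fibz_def by (simp add: power_mult_distrib flip: power_mult)

definition fibz_triple_sum :: "int \<Rightarrow> nat \<Rightarrow> int" where
  "fibz_triple_sum r n =
     (-1) ^ nat \<bar>r + 1\<bar> * fibz (2 * r * (int n + 1))
     + (-1) ^ nat \<bar>r * (int n + 1)\<bar> * fibz (2 * r)
     + fibz (2 * r * int n)"

lemma fibz_triple_sum_of_nat:
  "fibz_triple_sum (int m) n =
     (-1)^(m+1) * int (fib (2*m*(n+1))) + (-1)^(m*(n+1)) * int (fib (2*m)) + int (fib (2*m*n))"
  unfolding fibz_triple_sum_def by (simp add: fibz_nonneg nat_mult_distrib nat_add_distrib)

lemma fibz_triple_sum_uminus: "fibz_triple_sum (- r) n = - fibz_triple_sum r n"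
proof -
  have pos: "fibz_triple_sum (- int m) n = - fibz_triple_sum (int m) n" if "m > 0" for m
  proof -
    have signs: "nat \<bar>- int m + 1\<bar> = m - 1" "nat \<bar>- int m * (int n + 1)\<bar> = m * (n + 1)"
        "nat \<bar>int m + 1\<bar> = m + 1" "nat \<bar>int m * (int n + 1)\<bar> = m * (n + 1)"
      using \<open>m > 0\<close> by (simp_all add: nat_mult_distrib nat_add_distrib abs_mult)
    have parity: "(-1::int)^(m - 1) = (-1)^(m + 1)"
      using \<open>m > 0\<close> by (cases m) simp_all
    have fibzs: "fibz (2 * - int m * k) = - fibz (2 * int m * k)" for k
      using fibz_uminus_even[of "int m * k"] by (simp only: mult_minus_left mult_minus_right mult.assoc)
    show ?thesis
      unfolding fibz_triple_sum_def signs parity fibzs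
      by (simp only: mult_minus_right fibz_uminus_even minus_add_distrib)
  qed
  have zero: "fibz_triple_sum 0 n = 0"
    unfolding fibz_triple_sum_def fibz_def by simp
  show ?thesis
  proof (cases r "0::int" rule: linorder_cases)
    case less
    then show ?thesis
      using pos[of "nat (- r)"] by simp
  next
    case greater
    then show ?thesis
      using pos[of "nat r"] by simp
  qed (simp add: zero)
qed

lemma five_fibz_squared_dvd_triple_sum_of_nat: "5 * fibz (int m)^2 dvd fibz_triple_sum (int m) n"
  unfolding fibz_triple_sum_of_nat fibz_of_nat by (rule five_fib_squared_dvd)

lemma five_fibz_squared_dvd_triple_sum: "5 * fibz r^2 dvd fibz_triple_sum r n"
proof (cases "r \<ge> 0")
  case True
  then have "r = int (nat r)"
    by simp
  then show ?thesis
    by (metis five_fibz_squared_dvd_triple_sum_of_nat)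
next
  case False
  define m where "m = nat (- r)"
  with False have r: "r = - int m"
    by simp
  show ?thesis
    unfolding r fibz_triple_sum_uminus fibz_uminus_squared dvd_minus_iff
    by (rule five_fibz_squared_dvd_triple_sum_of_nat)
qed

theorem mainTheorem7:
  fixes r :: int and n :: nat
  assumes "r \<noteq> 0" and "n > 0"
  shows "5 * (fibz r)^2 dvd
    (-1) ^ nat \<bar>r + 1\<bar> * fibz (2 * r * (int n + 1))
    + (-1) ^ nat \<bar>r * (int n + 1)\<bar> * fibz (2 * r)
    + fibz (2 * r * int n)"
  using five_fibz_squared_dvd_triple_sum[of r n] unfolding fibz_triple_sum_def .

end
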